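(* Let $\mathcal D$ be a $(\gamma,V)$-stable distribution of $\mathbf X$. For a set of families $A\subseteq\mathcal F_{d,k}$ and an equivalence class $E$, let $E^{\cap A}:=\{G\in E: A\subseteq G\}$. Let $E_*$ be an optimal equivalence class, let $G^*\in E_*^{\cap A}$, and suppose there is an equivalence class $\tilde E\in\mathcal E_{d,k}$ with $\tilde E\neq E_*$, $\mathcal S(\tilde E)\ge\mathcal S^*-\gamma$ and $\tilde E^{\cap A}\neq\emptyset$. Then there exists a graph $\tilde G\in\tilde E^{\cap A}$ such that the families of all the variables in $V$ are the same in $G^*$ and in $\tilde G$.
   Context: $\mathbf X=(X_1,\dots,X_d)$ is a random vector; $k$ a fixed positive integer. A family is $\langle X_i,\Pi\rangle$ with $\Pi\subseteq\mathbf X\setminus\{X_i\}$, $|\Pi|\le k$, and $H(\langle X_i,\Pi\rangle)=H(X_i\mid\Pi)$; $\mathcal F_{d,k}$ is the set of families. $\mathcal G_{d,k}$ = DAGs over $\mathbf X$ with in-degree $\le k$, identified with their family sets; $\mathcal S(F)=-\sum_{f\in F}H(f)$; $\mathcal S^*=\max_{G\in\mathcal G_{d,k}}\mathcal S(G)$. $\mathcal E_{d,k}$ is the set of Markov equivalence classes (ECs) on $\mathcal G_{d,k}$ (DAGs with the same conditional independence constraints), which share a score $\mathcal S(E)$; an optimal EC has score $\mathcal S^*$. For $V\subseteq\mathbf X$, $\mathcal G_V$ is the set of DAGs over $V$ with in-degree at most $k$. $(\gamma,V)$-stable: for $\gamma>0$ and $V\subseteq\mathbf X$, (1) in every $G\in\mathcal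 G_{d,k}$ with $\mathcal S(G)\ge\mathcal S^*-\gamma$ all parents of every variable in $V$ are in $V$; (2) for the marginal distribution on $V$ (over $\mathcal G_V$) there is a unique optimal EC and the score gap between the best and second-best EC is more than $\gamma$. *)

theory Defs
  imports "HOL-Probability.Probability_Mass_Function" "HOL-Library.FuncSet"
begin

text \<open>Variables are indexed by natural numbers; X = (X_0,...,X_{d-1}).
  The joint distribution of X is a pmf p on assignments nat => 'b with finite support.
  A family is a pair (i, Pi) of a variable index and a parent set.\<close>

type_synonym family = "nat \<times> nat set"

definition ent :: "(nat \<Rightarrow> 'b) pmf \<Rightarrow> nat set \<Rightarrow> real" where
  "ent p S = - (\<Sum>y \<in> (\<lambda>x. restrict x S) ` set_pmf p.
       (let q = measure_pmf.prob p {x. restrict x S = y} in q * log 2 q))"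

text \<open>H(<X_i, Pi>) = H(X_i | Pi) = H(X_i, Pi) - H(Pi).\<close>
definition fam_ent :: "(nat \<Rightarrow> 'b) pmf \<Rightarrow> family \<Rightarrow> real" where
  "fam_ent p f = ent p (insert (fst f) (snd f)) - ent p (snd f)"

definition families :: "nat \<Rightarrow> nat \<Rightarrow> family set" where
  "families d k = {(i, P). i < d \<and> P \<subseteq> {..<d} - {i} \<and> card P \<le> k}"

definition score :: "(nat \<Rightarrow> 'b) pmf \<Rightarrow> family set \<Rightarrow> real" where
  "score p F = - (\<Sum>f\<in>F. fam_ent p f)"

definition edges :: "family set \<Rightarrow> (nat \<times> nat) set" where
  "edges G = {(j, i). \<exists>P. (i, P) \<in> G \<and> j \<in> P}"

definition dag :: "nat set \<Rightarrow> nat \<Rightarrow> family set \<Rightarrow> bool" where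
  "dag V k G \<longleftrightarrow> (\<forall>f\<in>G. fst f \<in> V \<and> snd f \<subseteq> V - {fst f} \<and> card (snd f) \<le> k)
     \<and> (\<forall>i\<in>V. \<exists>!P. (i, P) \<in> G) \<and> acyclic (edges G)"

definition dags :: "nat set \<Rightarrow> nat \<Rightarrow> family set set" where
  "dags V k = {G. dag V k G}"

definition is_collider :: "family set \<Rightarrow> nat list \<Rightarrow> nat \<Rightarrow> bool" where
  "is_collider G xs m \<longleftrightarrow> (xs ! (m - 1), xs ! m) \<in> edges G \<and> (xs ! (m + 1), xs ! m) \<in> edges G"

definition d_connecting :: "family set \<Rightarrow> nat set \<Rightarrow> nat list \<Rightarrow> bool" where
  "d_connecting G Z xs \<longleftrightarrow> length xs \<ge> 2 \<and> distinct xs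
     \<and> (\<forall>m. Suc m < length xs \<longrightarrow>
            (xs ! m, xs ! Suc m) \<in> edges G \<or> (xs ! Suc m, xs ! m) \<in> edges G)
     \<and> (\<forall>m. 0 < m \<and> Suc m < length xs \<longrightarrow>
            (if is_collider G xs m then (\<exists>z\<in>Z. (xs ! m, z) \<in> (edges G)\<^sup>*)
             else xs ! m \<notin> Z))"

definition d_sep :: "family set \<Rightarrow> nat set \<Rightarrow> nat set \<Rightarrow> nat set \<Rightarrow> bool" where
  "d_sep G X Y Z \<longleftrightarrow> (\<forall>xs. hd xs \<in> X \<and> last xs \<in> Y \<longrightarrow> \<not> d_connecting G Z xs)"

definition markov_equiv :: "nat set \<Rightarrow> family set \<Rightarrow> family set \<Rightarrow> bool" where
  "markov_equiv V G1 G2 \<longleftrightarrow> (\<forall>X Y Z. X \<subseteq> V \<and> Y \<subseteq> V \<and> Z \<subseteq> V \<and> X \<noteq> {} \<and> Y \<noteq> {}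
      \<and> X \<inter> Y = {} \<and> X \<inter> Z = {} \<and> Y \<inter> Z = {} \<longrightarrow> (d_sep G1 X Y Z \<longleftrightarrow> d_sep G2 X Y Z))"

definition is_EC :: "nat set \<Rightarrow> nat \<Rightarrow> family set set \<Rightarrow> bool" where
  "is_EC V k E \<longleftrightarrow> (\<exists>G. dag V k G \<and> E = {G'. dag V k G' \<and> markov_equiv V G G'})"

text \<open>Optimal score S* over DAGs on V (V finite).\<close>
definition opt_score :: "(nat \<Rightarrow> 'b) pmf \<Rightarrow> nat set \<Rightarrow> nat \<Rightarrow> real" where
  "opt_score p V k = Max (score p ` dags V k)"

definition cap :: "family set set \<Rightarrow> family set \<Rightarrow> family set set" where
  "cap E A = {G\<in>E. A \<subseteq> G}"

text \<open>(gamma,V)-stability of p (with X = X_0..X_{d-1}). The score of an EC is the common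
  score of its members; it is rendered by quantifying over the members.\<close>
definition stable :: "(nat \<Rightarrow> 'b) pmf \<Rightarrow> nat \<Rightarrow> nat \<Rightarrow> real \<Rightarrow> nat set \<Rightarrow> bool" where
  "stable p d k \<gamma> V \<longleftrightarrow> \<gamma> > 0 \<and> V \<subseteq> {..<d}
     \<and> (\<forall>G. dag {..<d} k G \<and> score p G \<ge> opt_score p {..<d} k - \<gamma> \<longrightarrow>
            (\<forall>f\<in>G. fst f \<in> V \<longrightarrow> snd f \<subseteq> V))
     \<and> (\<exists>E0. is_EC V k E0 \<and> (\<forall>G\<in>E0. score p G = opt_score p V k)
          \<and> (\<forall>E. is_EC V k E \<and> E \<noteq> E0 \<longrightarrow> (\<forall>G\<in>E. score p G < opt_score p V k - \<gamma>)))"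

end

(* By stability, every near-optimal DAG keeps the parents of V inside V, and its restriction
   to V lies in the unique optimal equivalence class over V: otherwise replacing it by an optimal
   DAG over V would beat the optimum. So the restrictions of G_star and of any G in E_tilde that
   contains A are Markov equivalent over V. Replacing the families of V in G by those of G_star
   keeps A and stays in E_tilde: by the Verma-Pearl theorem, Markov equivalence of DAGs means
   equal skeletons and equal v-structures, and neither changes, because no edge of the remaining
   families points into V. Both directions of Verma-Pearl are proved through Bayes-ball
   reachability, the harder one by Chickering's sequence of covered edge reversals. *)

theory Submission
  imports Defs
begin

section \<open>Open walks\<close>

definition adjacent :: "('a \<times> 'a) set \<Rightarrow> 'a \<Rightarrow> 'a \<Rightarrow> bool" where
  "adjacent E a b \<longleftrightarrow> (a, b) \<in> E \<or> (b, a) \<in> E"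

definition open_triple :: "('a \<times> 'a) set \<Rightarrow> 'a set \<Rightarrow> 'a \<Rightarrow> 'a \<Rightarrow> 'a \<Rightarrow> bool" where
  "open_triple E Z a v b \<longleftrightarrow>
     (if (a, v) \<in> E \<and> (b, v) \<in> E then \<exists>z\<in>Z. (v, z) \<in> E\<^sup>* else v \<notin> Z)"

text \<open>The condition of \<open>d_connecting\<close> without distinctness, stated recursively so that walks
  can be cut and glued.\<close>

fun open_walk :: "('a \<times> 'a) set \<Rightarrow> 'a set \<Rightarrow> 'a list \<Rightarrow> bool" where
  "open_walk E Z (a # b # c # vs) \<longleftrightarrow>
     adjacent E a b \<and> open_triple E Z a b c \<and> open_walk E Z (b # c # vs)"
| "open_walk E Z [a, b] \<longleftrightarrow> adjacent E a b"
| "open_walk E Z _ \<longleftrightarrow> True"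

lemma open_walk_Cons_Cons:
  "open_walk E Z (a # b # vs) \<longleftrightarrow>
     adjacent E a b \<and> (vs \<noteq> [] \<longrightarrow> open_triple E Z a b (hd vs)) \<and> open_walk E Z (b # vs)"
  by (cases vs) auto

lemma open_walk_append_Cons_Cons:
  "open_walk E Z (us @ a # b # vs) \<longleftrightarrow> open_walk E Z (us @ [a, b]) \<and> open_walk E Z (a # b # vs)"
proof (induction us rule: induct_list012)
  case (3 u u' us)
  then show ?case by (cases us) (simp_all add: open_walk_Cons_Cons)
qed (simp_all add: open_walk_Cons_Cons)

lemma open_walk_appendD1: "open_walk E Z (us @ vs) \<Longrightarrow> open_walk E Z us"
  by (induction us rule: open_walk.induct) (auto simp: open_walk_Cons_Cons)

lemma open_walk_appendD2: "open_walk E Z (us @ vs) \<Longrightarrow> open_walk E Z vs"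
proof (induction us)
  case (Cons u us)
  then show ?case by (cases "us @ vs") (auto simp: open_walk_Cons_Cons)
qed simp

lemma open_walk_iff_nth:
  "open_walk E Z vs \<longleftrightarrow>
     (\<forall>m. Suc m < length vs \<longrightarrow> adjacent E (vs ! m) (vs ! Suc m)) \<and>
     (\<forall>m. 0 < m \<and> Suc m < length vs \<longrightarrow> open_triple E Z (vs ! (m - 1)) (vs ! m) (vs ! Suc m))"
proof (induction vs rule: open_walk.induct)
  case (1 E Z a b c vs)
  have shift: "(\<forall>m. P m) \<longleftrightarrow> P 0 \<and> (\<forall>m. P (Suc m))" for P :: "nat \<Rightarrow> bool"
    by (metis not0_implies_Suc)
  let ?vs = "b # c # vs"
  have "(\<forall>m. Suc m < length (a # ?vs) \<longrightarrow> adjacent E ((a # ?vs) ! m) ((a # ?vs) ! Suc m)) \<longleftrightarrow>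
      adjacent E a b \<and> (\<forall>m. Suc m < length ?vs \<longrightarrow> adjacent E (?vs ! m) (?vs ! Suc m))"
    by (subst shift) simp
  moreover have "(\<forall>m. 0 < m \<and> Suc m < length (a # ?vs) \<longrightarrow>
        open_triple E Z ((a # ?vs) ! (m - 1)) ((a # ?vs) ! m) ((a # ?vs) ! Suc m)) \<longleftrightarrow>
      open_triple E Z a b c \<and>
      (\<forall>m. 0 < m \<and> Suc m < length ?vs \<longrightarrow> open_triple E Z (?vs ! (m - 1)) (?vs ! m) (?vs ! Suc m))"
    by (subst shift, subst (2) shift) (auto simp: nth_Cons split: nat.split)
  ultimately show ?case
    using 1 by (simp only: open_walk.simps) blast
qed (auto simp: less_Suc_eq)

lemma d_connecting_iff_open_walk:
  "d_connecting G Z vs \<longleftrightarrow> 2 \<le> length vs \<and> distinct vs \<and> open_walk (edges G) Z vs"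
  unfolding d_connecting_def open_walk_iff_nth is_collider_def open_triple_def adjacent_def
  by auto

lemma acyclic_asym: "acyclic E \<Longrightarrow> (a, b) \<in> E \<Longrightarrow> (b, a) \<notin> E"
  by (meson acyclic_def r_into_trancl trancl_into_trancl)

lemma acyclic_no_loop: "acyclic E \<Longrightarrow> (a, a) \<notin> E"
  by (meson acyclic_def r_into_trancl)

lemma open_walk_directed:
  assumes "open_walk E Z (v # vs)" "vs \<noteq> []" "(v, hd vs) \<in> E" "\<not> (\<exists>z\<in>Z. (v, z) \<in> E\<^sup>*)"
  shows "(v, last vs) \<in> E\<^sup>+"
  using assms
proof (induction vs arbitrary: v)
  case (Cons b vs)
  have b_unobserved: "\<not> (\<exists>z\<in>Z. (b, z) \<in> E\<^sup>*)"
    using Cons.prems(3,4) by (auto intro: converse_rtrancl_into_rtrancl)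
  show ?case
  proof (cases vs)
    case (Cons c vs')
    have "adjacent E b c" "open_triple E Z v b c" "open_walk E Z (b # vs)"
      using Cons.prems(1) \<open>vs = c # vs'\<close> by (auto simp: open_walk_Cons_Cons)
    then have "(b, c) \<in> E"
      using b_unobserved Cons.prems(3) by (auto simp: open_triple_def adjacent_def)
    then have "(b, last vs) \<in> E\<^sup>+"
      using Cons.IH \<open>open_walk E Z (b # vs)\<close> b_unobserved \<open>vs = c # vs'\<close> by simp
    then show ?thesis
      using Cons.prems(3) \<open>vs = c # vs'\<close> by (simp add: trancl_into_trancl2)
  qed (use Cons.prems in auto)
qed simp

lemma open_walk_loop_observed:
  assumes "acyclic E" "open_walk E Z (u # v # b # ws @ [v])" "(u, v) \<in> E"
  shows "\<exists>z\<in>Z. (v, z) \<in> E\<^sup>*"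
proof (rule ccontr)
  assume unobserved: "\<not> (\<exists>z\<in>Z. (v, z) \<in> E\<^sup>*)"
  have loop: "open_walk E Z (v # b # ws @ [v])"
    using open_walk_appendD2[of E Z "[u]"] assms(2) by simp
  have "(v, b) \<in> E"
    using assms(2,3) unobserved by (auto simp: open_walk_Cons_Cons open_triple_def adjacent_def)
  then have "(v, v) \<in> E\<^sup>+"
    using open_walk_directed[OF loop _ _ unobserved] by simp
  then show False
    using assms(1) by (simp add: acyclic_def)
qed

lemma open_triple_skip_loop:
  assumes "acyclic E" and walk: "open_walk E Z (u # v # ws @ v # w # vs)"
  shows "open_triple E Z u v w"
proof -
  have "ws \<noteq> []"
  proof
    assume "ws = []"
    then have "adjacent E v v"
      using open_walk_appendD2[of E Z "[u]"] walk by (simp add: open_walk_Cons_Cons)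
    then show False
      using acyclic_no_loop[OF \<open>acyclic E\<close>] by (auto simp: adjacent_def)
  qed
  then obtain b1 ws1 b2 ws2 where ws: "ws = b1 # ws1" "ws = ws2 @ [b2]"
    by (metis list.exhaust rev_exhaust)
  have first: "open_triple E Z u v b1"
    using walk ws(1) by (simp add: open_walk_Cons_Cons)
  have last: "open_triple E Z b2 v w"
    using open_walk_appendD2[of E Z "u # v # ws2" "b2 # v # w # vs"] walk ws(2)
    by (simp add: open_walk_Cons_Cons)
  show ?thesis
  proof (cases "(u, v) \<in> E \<and> (w, v) \<in> E")
    case True
    have "open_walk E Z (u # v # b1 # ws1 @ [v])"
      using open_walk_appendD1[of E Z "u # v # ws @ [v]" "w # vs"] walk ws(1) by simp
    then have "\<exists>z\<in>Z. (v, z) \<in> E\<^sup>*"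
      using open_walk_loop_observed[OF \<open>acyclic E\<close>] True by blast
    then show ?thesis
      using True by (simp add: open_triple_def)
  next
    case False
    then have "v \<notin> Z"
      using first last by (auto simp: open_triple_def split: if_splits)
    then show ?thesis
      using False by (auto simp: open_triple_def)
  qed
qed

lemma open_walk_skip_loop:
  assumes "acyclic E" and walk: "open_walk E Z (us @ v # ws @ v # vs)"
  shows "open_walk E Z (us @ v # vs)"
proof (cases "us = [] \<or> vs = []")
  case True
  then show ?thesis
    using open_walk_appendD2[of E Z "v # ws" "v # vs"] open_walk_appendD1[of E Z "us @ [v]" "ws @ [v]"] walk
    by auto
next
  case False
  then obtain us' u w vs' where split: "us = us' @ [u]" "vs = w # vs'"
    by (metis list.exhaust rev_exhaust)
  have "open_walk E Z (us' @ [u, v])"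
    using open_walk_appendD1[of E Z "us' @ [u, v]" "ws @ v # vs"] walk split by simp
  moreover have "open_walk E Z (u # v # ws @ v # w # vs')"
    using open_walk_appendD2[of E Z us' "u # v # ws @ v # w # vs'"] walk split by simp
  moreover have "open_walk E Z (v # w # vs')"
    using open_walk_appendD2[of E Z "u # v # ws" "v # w # vs'"] calculation(2) by simp
  ultimately show ?thesis
    using open_triple_skip_loop[OF assms(1)] open_walk_append_Cons_Cons[of E Z us' u v "w # vs'"] split
    by (simp add: open_walk_Cons_Cons)
qed

lemma open_walk_to_path:
  assumes "acyclic E" "X \<inter> Y = {}"
  shows "open_walk E Z xs \<Longrightarrow> xs \<noteq> [] \<Longrightarrow> hd xs \<in> X \<Longrightarrow> last xs \<in> Y \<Longrightarrow>
    \<exists>ys. 2 \<le> length ys \<and> distinct ys \<and> open_walk E Z ys \<and> hd ys \<in> X \<and> last ys \<in> Y"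
proof (induction "length xs" arbitrary: xs rule: less_induct)
  case less
  show ?case
  proof (cases "distinct xs")
    case True
    have "length xs \<noteq> 1"
      using less.prems assms(2) by (auto simp: length_Suc_conv)
    then show ?thesis
      using True less.prems by (metis One_nat_def length_0_conv less_2_cases not_le)
  next
    case False
    then obtain us v ws vs where xs: "xs = us @ [v] @ ws @ [v] @ vs"
      using not_distinct_decomp by blast
    have "open_walk E Z (us @ v # vs)"
      using open_walk_skip_loop[OF assms(1)] less.prems(1) xs by simp
    moreover have "hd (us @ v # vs) \<in> X" "last (us @ v # vs) \<in> Y"
      using less.prems(3,4) xs by (cases us; cases vs; simp)+
    ultimately show ?thesis
      using less.hyps[of "us @ v # vs"] xs by simp
  qed
qed

section \<open>Bayes-ball reachability\<close>

text \<open>\<open>bayes_ball E Z S v d\<close> says that v is reached from S by a trail that is active given Z,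
  entering v along an edge into v iff d. A collider is only passed at an observed vertex;
  colliders with an observed descendant are passed by walking down to it and back up
  (lemma \<open>bayes_ball_bounce\<close>).\<close>

inductive bayes_ball :: "('a \<times> 'a) set \<Rightarrow> 'a set \<Rightarrow> 'a set \<Rightarrow> 'a \<Rightarrow> bool \<Rightarrow> bool"
  for E Z S where
  start: "x \<in> S \<Longrightarrow> x \<notin> Z \<Longrightarrow> bayes_ball E Z S x False"
| to_child: "bayes_ball E Z S u d \<Longrightarrow> u \<notin> Z \<Longrightarrow> (u, v) \<in> E \<Longrightarrow> bayes_ball E Z S v True"
| to_parent: "bayes_ball E Z S u (u \<in> Z) \<Longrightarrow> (v, u) \<in> E \<Longrightarrow> bayes_ball E Z S v False"

lemma bayes_ball_bounce:
  assumes "(u, z) \<in> E\<^sup>*" "z \<in> Z" "bayes_ball E Z S u True"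
  shows "bayes_ball E Z S u (u \<in> Z)"
  using assms
proof (induction rule: converse_rtrancl_induct)
  case (step u w)
  show ?case
  proof (cases "u \<in> Z")
    case False
    have "bayes_ball E Z S w True"
      using step.prems(2) False step.hyps(1) by (rule bayes_ball.to_child)
    then have "bayes_ball E Z S w (w \<in> Z)"
      using step.IH step.prems(1) by blast
    then show ?thesis
      using False step.hyps(1) bayes_ball.to_parent by fastforce
  qed (use step.prems in simp)
qed simp

lemma bayes_ball_pass:
  assumes "acyclic E" "bayes_ball E Z S u ((t, u) \<in> E)" "adjacent E u c" "open_triple E Z t u c"
  shows "bayes_ball E Z S c ((u, c) \<in> E)"
proof (cases "(u, c) \<in> E")
  case True
  then have "u \<notin> Z"
    using assms(4) acyclic_asym[OF assms(1)] by (auto simp: open_triple_def)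
  then show ?thesis
    using True assms(2) bayes_ball.to_child by auto
next
  case False
  then have "(c, u) \<in> E"
    using assms(3) by (simp add: adjacent_def)
  moreover have "bayes_ball E Z S u (u \<in> Z)"
  proof (cases "(t, u) \<in> E")
    case True
    then show ?thesis
      using assms(2,4) \<open>(c, u) \<in> E\<close> bayes_ball_bounce by (fastforce simp: open_triple_def)
  next
    case False
    then show ?thesis
      using assms(2,4) by (simp add: open_triple_def)
  qed
  ultimately show ?thesis
    using False bayes_ball.to_parent by auto
qed

lemma bayes_ball_along_open_walk:
  assumes "acyclic E"
  shows "bayes_ball E Z S u ((t, u) \<in> E) \<Longrightarrow> open_walk E Z (t # u # vs) \<Longrightarrow>
    \<exists>d. bayes_ball E Z S (last (u # vs)) d"
proof (induction vs arbitrary: t u)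
  case (Cons c vs)
  have "bayes_ball E Z S c ((u, c) \<in> E)"
    using bayes_ball_pass[OF assms Cons.prems(1)] Cons.prems(2) by (simp add: open_walk_Cons_Cons)
  then show ?case
    using Cons.IH[of c u] Cons.prems(2) by (simp add: open_walk_Cons_Cons)
qed auto

lemma open_walk_imp_bayes_ball:
  assumes "acyclic E" "open_walk E Z (x # vs)" "vs \<noteq> []" "x \<in> S" "x \<notin> Z"
  shows "\<exists>d. bayes_ball E Z S (last vs) d"
proof -
  obtain b vs' where vs: "vs = b # vs'"
    using assms(3) by (cases vs) auto
  have "bayes_ball E Z S x False"
    using assms(4,5) by (rule bayes_ball.start)
  then have "bayes_ball E Z S b ((x, b) \<in> E)"
  proof (cases "(x, b) \<in> E")
    case True
    then show ?thesis
      using \<open>bayes_ball E Z S x False\<close> assms(5) bayes_ball.to_child by auto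
  next
    case False
    then have "(b, x) \<in> E"
      using assms(2) vs by (simp add: open_walk_Cons_Cons adjacent_def)
    moreover have "bayes_ball E Z S x (x \<in> Z)"
      using \<open>bayes_ball E Z S x False\<close> assms(5) by simp
    ultimately show ?thesis
      using False bayes_ball.to_parent by auto
  qed
  then show ?thesis
    using bayes_ball_along_open_walk[OF assms(1)] assms(2) vs by blast
qed

lemma open_walk_snoc:
  assumes "open_walk E Z (ws @ [u])" "adjacent E u v" "ws \<noteq> [] \<Longrightarrow> open_triple E Z (last ws) u v"
  shows "open_walk E Z (ws @ [u, v])"
proof (cases ws rule: rev_cases)
  case (snoc ws' t)
  then show ?thesis
    using assms open_walk_append_Cons_Cons[of E Z ws' t u "[v]"]
      open_walk_appendD2[of E Z ws' "[t, u]"] by (simp add: open_walk_Cons_Cons)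
qed (use assms in simp)

lemma bayes_ball_imp_open_walk:
  assumes "acyclic E"
  shows "bayes_ball E Z S u d \<Longrightarrow>
    \<exists>ws. open_walk E Z (ws @ [u]) \<and> hd (ws @ [u]) \<in> S \<and> d = (ws \<noteq> [] \<and> (last ws, u) \<in> E)"
proof (induction rule: bayes_ball.induct)
  case (start x)
  then show ?case
    by (intro exI[of _ "[]"]) auto
next
  case (to_child u d v)
  then obtain ws where ws: "open_walk E Z (ws @ [u])" "hd (ws @ [u]) \<in> S"
    by blast
  have "(v, u) \<notin> E"
    using acyclic_asym[OF assms to_child.hyps(3)] .
  then have "ws \<noteq> [] \<Longrightarrow> open_triple E Z (last ws) u v"
    using to_child.hyps(2) by (simp add: open_triple_def)
  then have "open_walk E Z (ws @ [u, v])"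
    using open_walk_snoc[OF ws(1)] to_child.hyps(3) by (simp add: adjacent_def)
  then show ?case
    using ws(2) to_child.hyps(3) by (intro exI[of _ "ws @ [u]"]) (auto simp: hd_append)
next
  case (to_parent u v)
  then obtain ws where ws: "open_walk E Z (ws @ [u])" "hd (ws @ [u]) \<in> S"
    "(u \<in> Z) = (ws \<noteq> [] \<and> (last ws, u) \<in> E)" by blast
  have "ws \<noteq> [] \<Longrightarrow> open_triple E Z (last ws) u v"
    using ws(3) to_parent.hyps(2) by (auto simp: open_triple_def)
  then have "open_walk E Z (ws @ [u, v])"
    using open_walk_snoc[OF ws(1)] to_parent.hyps(2) by (simp add: adjacent_def)
  moreover have "(u, v) \<notin> E"
    using acyclic_asym[OF assms to_parent.hyps(2)] .
  ultimately show ?case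
    using ws(2) by (intro exI[of _ "ws @ [u]"]) (auto simp: hd_append)
qed

lemma d_sep_iff_bayes_ball:
  assumes "acyclic (edges G)" "X \<inter> Y = {}" "X \<inter> Z = {}"
  shows "d_sep G X Y Z \<longleftrightarrow> \<not> (\<exists>y\<in>Y. \<exists>d. bayes_ball (edges G) Z X y d)"
proof
  assume sep: "d_sep G X Y Z"
  show "\<not> (\<exists>y\<in>Y. \<exists>d. bayes_ball (edges G) Z X y d)"
  proof
    assume "\<exists>y\<in>Y. \<exists>d. bayes_ball (edges G) Z X y d"
    then obtain y ws where "y \<in> Y" "open_walk (edges G) Z (ws @ [y])" "hd (ws @ [y]) \<in> X"
      using bayes_ball_imp_open_walk[OF assms(1)] by blast
    then obtain ys where "d_connecting G Z ys" "hd ys \<in> X" "last ys \<in> Y"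
      using open_walk_to_path[OF assms(1,2), of Z "ws @ [y]"] by (auto simp: d_connecting_iff_open_walk)
    then show False
      using sep by (auto simp: d_sep_def)
  qed
next
  assume no_ball: "\<not> (\<exists>y\<in>Y. \<exists>d. bayes_ball (edges G) Z X y d)"
  show "d_sep G X Y Z"
    unfolding d_sep_def
  proof (intro allI impI notI)
    fix xs
    assume ends: "hd xs \<in> X \<and> last xs \<in> Y" and conn: "d_connecting G Z xs"
    then obtain x vs where xs: "xs = x # vs"
      by (cases xs) (auto simp: d_connecting_def)
    then have "vs \<noteq> []" "open_walk (edges G) Z (x # vs)"
      using conn by (auto simp: d_connecting_iff_open_walk)
    then have "\<exists>d. bayes_ball (edges G) Z X (last vs) d"
      using open_walk_imp_bayes_ball[OF assms(1), of Z x vs X] ends assms(3) xs by auto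
    then show False
      using no_ball ends xs \<open>vs \<noteq> []\<close> by auto
  qed
qed

section \<open>Covered edge reversals\<close>

definition v_structure :: "('a \<times> 'a) set \<Rightarrow> 'a \<Rightarrow> 'a \<Rightarrow> 'a \<Rightarrow> bool" where
  "v_structure E a c b \<longleftrightarrow> (a, c) \<in> E \<and> (b, c) \<in> E \<and> a \<noteq> b \<and> \<not> adjacent E a b"

locale covered_edge =
  fixes E :: "('a \<times> 'a) set" and a b :: 'a
  assumes acyclic: "acyclic E"
    and edge: "(a, b) \<in> E"
    and parents: "\<And>p. (p, b) \<in> E \<longleftrightarrow> p = a \<or> (p, a) \<in> E"
begin

definition reversed :: "('a \<times> 'a) set" where
  "reversed = insert (b, a) (E - {(a, b)})"

lemma a_neq_b: "a \<noteq> b"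
  using edge acyclic_no_loop[OF acyclic] by auto

lemma not_edge_ba: "(b, a) \<notin> E"
  using acyclic_asym[OF acyclic edge] .

lemma reversed_iff: "(x, y) \<in> reversed \<longleftrightarrow> (x, y) = (b, a) \<or> ((x, y) \<in> E \<and> (x, y) \<noteq> (a, b))"
  by (auto simp: reversed_def)

lemma adjacent_reversed: "adjacent reversed x y \<longleftrightarrow> adjacent E x y"
  using edge by (auto simp: reversed_def adjacent_def)

lemma acyclic_reversed: "acyclic reversed"
proof -
  have "(a, b) \<notin> (E - {(a, b)})\<^sup>*"
  proof
    assume "(a, b) \<in> (E - {(a, b)})\<^sup>*"
    then have "(a, b) \<in> (E - {(a, b)})\<^sup>+"
      using a_neq_b by (simp add: rtrancl_eq_or_trancl)
    then obtain q where q: "(a, q) \<in> (E - {(a, b)})\<^sup>*" "(q, b) \<in> E - {(a, b)}"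
      using tranclD2 by metis
    then have "(q, a) \<in> E"
      using parents by auto
    moreover have "(a, q) \<in> E\<^sup>*"
      using q(1) rtrancl_mono[of "E - {(a, b)}" E] by auto
    ultimately have "(a, a) \<in> E\<^sup>+"
      by (simp add: rtrancl_into_trancl1)
    then show False
      using acyclic by (simp add: acyclic_def)
  qed
  then show ?thesis
    using acyclic_subset[OF acyclic, of "E - {(a, b)}"] by (auto simp: reversed_def)
qed

lemma reversed_covered: "covered_edge reversed b a"
  by unfold_locales (use acyclic_reversed a_neq_b parents acyclic_no_loop[OF acyclic] in
      \<open>auto simp: reversed_def\<close>)

lemma reversed_reversed: "covered_edge.reversed reversed b a = E"
  using covered_edge.reversed_def[OF reversed_covered] edge not_edge_ba a_neq_b
  by (auto simp: reversed_def)

text \<open>A reversal keeps all v-structures because a and b have the same parents apart from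
  each other.\<close>

lemma v_structure_reversed: "v_structure reversed x z y \<longleftrightarrow> v_structure E x z y"
  using parents edge a_neq_b
  by (auto simp: v_structure_def adjacent_reversed reversed_iff adjacent_def)

context
  fixes Z S :: "'a set"
begin

abbreviation ball_rev :: "'a \<Rightarrow> bool \<Rightarrow> bool" where
  "ball_rev \<equiv> bayes_ball reversed Z S"

text \<open>The simulation invariant: what a Bayes-ball state of E guarantees in the reversed graph.\<close>

definition reversal_image :: "'a \<Rightarrow> bool \<Rightarrow> bool" where
  "reversal_image u d \<longleftrightarrow>
     (if u = a then
        if d then ball_rev a True \<and> ball_rev b True
        else ball_rev a False \<or> (b \<in> Z \<and> ball_rev a True \<and> ball_rev b True)
          \<or> (b \<notin> Z \<and> ball_rev b False)
      else if u = b then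
        if d then (ball_rev a True \<and> ball_rev b True) \<or> (a \<notin> Z \<and> ball_rev a False)
          \<or> (a \<notin> Z \<and> b \<notin> Z \<and> ball_rev b False)
        else ball_rev b False
      else ball_rev u d)"

lemma reversal_image_reached:
  assumes "reversal_image u d"
  shows "\<exists>d'. ball_rev u d'"
proof -
  have "ball_rev a True" if "b \<notin> Z" "ball_rev b False"
    using bayes_ball.to_child[OF that(2,1)] by (simp add: reversed_iff)
  moreover have "ball_rev b False" if "a \<notin> Z" "ball_rev a False"
    using bayes_ball.to_parent[of reversed Z S a b] that by (simp add: reversed_iff)
  ultimately show ?thesis
    using assms a_neq_b by (auto simp: reversal_image_def split: if_splits)
qed

lemma reversal_image_start: "x \<in> S \<Longrightarrow> x \<notin> Z \<Longrightarrow> reversal_image x False"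
  using bayes_ball.start[of x S Z reversed] by (auto simp: reversal_image_def)

lemma reversal_image_to_child:
  assumes "reversal_image u d" "u \<notin> Z" "(u, v) \<in> E"
  shows "reversal_image v True"
proof -
  have "u \<noteq> v" "u = b \<Longrightarrow> v \<notin> {a, b}"
    using assms(3) acyclic_no_loop[OF acyclic] not_edge_ba by auto
  then consider "u = a" "v = b" | "u \<in> {a, b}" "v \<notin> {a, b}" | "u \<notin> {a, b}" "v \<in> {a, b}"
    | "u \<notin> {a, b}" "v \<notin> {a, b}"
    by blast
  then show ?thesis
  proof cases
    case 1
    then show ?thesis
      using assms(1,2) a_neq_b by (cases d) (auto simp: reversal_image_def)
  next
    case 2
    obtain d' where "ball_rev u d'"
      using reversal_image_reached assms(1) by blast
    moreover have "(u, v) \<in> reversed"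
      using 2 assms(3) by (auto simp: reversed_iff)
    ultimately have "ball_rev v True"
      by (rule bayes_ball.to_child[OF _ assms(2)])
    then show ?thesis
      using 2 by (auto simp: reversal_image_def)
  next
    case 3
    then have "ball_rev u d"
      using assms(1) by (simp add: reversal_image_def)
    moreover have "(u, a) \<in> reversed" "(u, b) \<in> reversed"
      using 3 assms(3) parents by (auto simp: reversed_iff)
    ultimately have "ball_rev a True" "ball_rev b True"
      using assms(2) bayes_ball.to_child by metis+
    then show ?thesis
      using 3 by (auto simp: reversal_image_def)
  next
    case 4
    then have "ball_rev u d"
      using assms(1) by (simp add: reversal_image_def)
    moreover have "(u, v) \<in> reversed"
      using 4 assms(3) by (simp add: reversed_iff)
    ultimately have "ball_rev v True"
      by (rule bayes_ball.to_child[OF _ assms(2)])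
    then show ?thesis
      using 4 by (simp add: reversal_image_def)
  qed
qed

lemma reversal_image_bounce:
  assumes "reversal_image u (u \<in> Z)" "u \<in> {a, b}"
  shows "\<exists>w\<in>{a, b}. ball_rev w (w \<in> Z)"
  using assms a_neq_b by (cases "u = a"; cases "a \<in> Z"; cases "b \<in> Z") (auto simp: reversal_image_def)

lemma reversal_image_to_parent:
  assumes "reversal_image u (u \<in> Z)" "(v, u) \<in> E"
  shows "reversal_image v False"
proof -
  have "v \<noteq> u"
    using assms(2) acyclic_no_loop[OF acyclic] by auto
  have "(v, a) \<notin> E" if "v = b"
    using that not_edge_ba parents acyclic_no_loop[OF acyclic] by auto
  consider "u \<in> {a, b}" "v \<notin> {a, b}" | "u = b" "v = a" | "u \<notin> {a, b}"
    using \<open>v \<noteq> u\<close> assms(2) not_edge_ba by auto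
  then show ?thesis
  proof cases
    case 1
    then have "(v, a) \<in> reversed" "(v, b) \<in> reversed"
      using assms(2) parents by (auto simp: reversed_iff)
    moreover obtain w where "w \<in> {a, b}" "ball_rev w (w \<in> Z)"
      using reversal_image_bounce[OF assms(1) 1(1)] by blast
    ultimately have "ball_rev v False"
      using bayes_ball.to_parent by (metis insertE singletonD)
    then show ?thesis
      using 1(2) by (simp add: reversal_image_def)
  next
    case 2
    then show ?thesis
      using assms(1) a_neq_b by (cases "b \<in> Z") (auto simp: reversal_image_def)
  next
    case 3
    then have "ball_rev u (u \<in> Z)"
      using assms(1) by (simp add: reversal_image_def)
    moreover have "(v, u) \<in> reversed"
      using 3 assms(2) by (simp add: reversed_iff)
    ultimately have "ball_rev v False"
      by (rule bayes_ball.to_parent)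
    then show ?thesis
      using a_neq_b by (auto simp: reversal_image_def)
  qed
qed

lemma bayes_ball_reversal_image: "bayes_ball E Z S u d \<Longrightarrow> reversal_image u d"
proof (induction rule: bayes_ball.induct)
  case (start x)
  then show ?case by (rule reversal_image_start)
next
  case (to_child u d v)
  from to_child.IH to_child.hyps(2,3) show ?case
    by (rule reversal_image_to_child)
next
  case (to_parent u v)
  from to_parent.IH to_parent.hyps(2) show ?case
    by (rule reversal_image_to_parent)
qed

lemma bayes_ball_reversedI:
  assumes "bayes_ball E Z S u d"
  shows "\<exists>d'. ball_rev u d'"
  using reversal_image_reached[OF bayes_ball_reversal_image[OF assms]] .

end

lemma bayes_ball_reversed_iff: "(\<exists>d. bayes_ball E Z S u d) \<longleftrightarrow> (\<exists>d. bayes_ball reversed Z S u d)"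
  using bayes_ball_reversedI covered_edge.bayes_ball_reversedI[OF reversed_covered] reversed_reversed
  by metis

end

text \<open>Chickering's choice of an edge of E1 that is reversed in E2: its head y is minimal and
  then its tail x maximal with respect to E1.\<close>

context
  fixes E1 E2 :: "('a \<times> 'a) set" and x y :: 'a
  assumes acyclic1: "acyclic E1" and acyclic2: "acyclic E2"
    and same_adj: "\<And>u v. adjacent E1 u v \<longleftrightarrow> adjacent E2 u v"
    and same_v: "\<And>u w v. v_structure E1 u w v \<longleftrightarrow> v_structure E2 u w v"
    and xy: "(x, y) \<in> E1" "(x, y) \<notin> E2"
    and y_min: "\<And>y'. (y', y) \<in> E1\<^sup>+ \<Longrightarrow> y' \<notin> snd ` (E1 - E2)"
    and x_max: "\<And>x'. (x, x') \<in> E1\<^sup>+ \<Longrightarrow> (x', y) \<notin> E1 - E2"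
begin

lemma extremal_reversed_edge_yx: "(y, x) \<in> E2" "(y, x) \<notin> E1"
  using same_adj[of x y] xy acyclic_asym[OF acyclic1] by (auto simp: adjacent_def)

lemma extremal_reversed_edge_parent_head:
  assumes "(p, y) \<in> E1" "p \<noteq> x"
  shows "(p, x) \<in> E1"
proof (rule ccontr)
  assume "(p, x) \<notin> E1"
  show False
  proof (cases "adjacent E1 p x")
    case False
    then have "v_structure E2 p y x"
      using same_v[of p y x] assms xy(1) by (simp add: v_structure_def)
    then show False
      using xy(2) by (simp add: v_structure_def)
  next
    case True
    with \<open>(p, x) \<notin> E1\<close> have "(x, p) \<in> E1"
      by (simp add: adjacent_def)
    then have "(p, y) \<in> E2"
      using x_max[of p] assms(1) by auto
    then have "(x, p) \<notin> E2"
      using extremal_reversed_edge_yx(1) acyclic2 by (meson acyclic_def trancl.intros trancl_into_trancl)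
    then have "p \<in> snd ` (E1 - E2)"
      using \<open>(x, p) \<in> E1\<close> by force
    then show False
      using y_min[of p] assms(1) by blast
  qed
qed

lemma extremal_reversed_edge_parent_tail:
  assumes "(p, x) \<in> E1"
  shows "(p, y) \<in> E1"
proof (rule ccontr)
  assume "(p, y) \<notin> E1"
  moreover have "(y, p) \<notin> E1"
    using assms xy(1) acyclic1 by (meson acyclic_def trancl.intros trancl_into_trancl)
  ultimately have "\<not> adjacent E2 p y"
    using same_adj[of p y] by (simp add: adjacent_def)
  show False
  proof (cases "(p, x) \<in> E2")
    case True
    then have "v_structure E1 p x y"
      using same_v[of p x y] extremal_reversed_edge_yx \<open>\<not> adjacent E2 p y\<close> assms
      by (auto simp: v_structure_def adjacent_def)
    then show False
      using extremal_reversed_edge_yx(2) by (simp add: v_structure_def)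
  next
    case False
    then have "x \<in> snd ` (E1 - E2)"
      using assms by force
    then show False
      using y_min[of x] xy(1) by blast
  qed
qed

lemma extremal_reversed_edge_covered: "covered_edge E1 x y"
  using acyclic1 xy(1) extremal_reversed_edge_parent_head extremal_reversed_edge_parent_tail
  by unfold_locales blast+

end

lemma exists_covered_edge_in_diff:
  assumes "finite E1" "acyclic E1" "acyclic E2"
    and "\<And>x y. adjacent E1 x y \<longleftrightarrow> adjacent E2 x y"
    and "\<And>x z y. v_structure E1 x z y \<longleftrightarrow> v_structure E2 x z y"
    and "E1 - E2 \<noteq> {}"
  obtains x y where "(x, y) \<in> E1 - E2" "covered_edge E1 x y"
proof -
  let ?heads = "snd ` (E1 - E2)"
  obtain y where "y \<in> ?heads" and y_min: "\<And>y'. (y', y) \<in> E1\<^sup>+ \<Longrightarrow> y' \<notin> ?heads"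
    using wf_eq_minimal[THEN iffD1, OF wf_trancl[OF finite_acyclic_wf[OF assms(1,2)]]] assms(6)
    by (metis (no_types, lifting) ex_in_conv image_is_empty)
  let ?tails = "{x. (x, y) \<in> E1 - E2}"
  obtain x where "x \<in> ?tails" and x_max: "\<And>x'. (x', x) \<in> (E1\<inverse>)\<^sup>+ \<Longrightarrow> x' \<notin> ?tails"
    using wf_eq_minimal[THEN iffD1, OF wf_trancl[OF finite_acyclic_wf_converse[OF assms(1,2)]]]
      \<open>y \<in> ?heads\<close> by (metis (no_types, lifting) image_iff mem_Collect_eq prod.collapse)
  then have "covered_edge E1 x y"
    using extremal_reversed_edge_covered[OF assms(2-5)] y_min by (simp add: trancl_converse)
  then show thesis
    using that \<open>x \<in> ?tails\<close> by blast
qed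

lemma bayes_ball_eq_if_same_skeleton_v_structures:
  assumes "finite E1" "acyclic E1" "acyclic E2"
    and "\<And>x y. adjacent E1 x y \<longleftrightarrow> adjacent E2 x y"
    and "\<And>x z y. v_structure E1 x z y \<longleftrightarrow> v_structure E2 x z y"
  shows "(\<exists>d. bayes_ball E1 Z S u d) \<longleftrightarrow> (\<exists>d. bayes_ball E2 Z S u d)"
  using assms
proof (induction "card (E1 - E2)" arbitrary: E1 rule: less_induct)
  case less
  show ?case
  proof (cases "E1 - E2 = {}")
    case True
    have "E1 = E2"
    proof
      show "E1 \<subseteq> E2"
        using True by blast
      show "E2 \<subseteq> E1"
        using True less.prems(3,4) acyclic_asym[OF less.prems(3)] by (fastforce simp: adjacent_def)
    qed
    then show ?thesis
      by simp
  next
    case False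
    then obtain x y where xy: "(x, y) \<in> E1 - E2" and "covered_edge E1 x y"
      using exists_covered_edge_in_diff less.prems by metis
    interpret covered_edge E1 x y by fact
    have "reversed - E2 = (E1 - E2) - {(x, y)}"
      using less.prems(4)[of x y] xy acyclic_asym[OF less.prems(3)]
      by (auto simp: reversed_def adjacent_def)
    then have "card (reversed - E2) < card (E1 - E2)"
      using xy less.prems(1) by (metis card_Diff1_less finite_Diff)
    moreover have "finite reversed"
      using less.prems(1) by (simp add: reversed_def)
    ultimately have "(\<exists>d. bayes_ball reversed Z S u d) \<longleftrightarrow> (\<exists>d. bayes_ball E2 Z S u d)"
      using less.hyps acyclic_reversed less.prems(3-5) adjacent_reversed v_structure_reversed
      by presburger
    then show ?thesis
      using bayes_ball_reversed_iff by simp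
  qed
qed


section \<open>Markov equivalence of DAGs\<close>

lemma d_connecting_not_d_sep: "d_connecting G Z xs \<Longrightarrow> \<not> d_sep G {hd xs} {last xs} Z"
  by (auto simp: d_sep_def)

lemma bayes_ball_given_parents_of_start:
  assumes "acyclic E"
  shows "bayes_ball E {p. (p, a) \<in> E} {a} u d \<Longrightarrow> (if d then (a, u) \<in> E\<^sup>+ else u = a \<or> (u, a) \<in> E)"
proof (induction rule: bayes_ball.induct)
  case (to_child u d v)
  then show ?case
    by (auto split: if_splits intro: trancl_into_trancl)
next
  case (to_parent u v)
  have "u = a"
  proof (cases "(u, a) \<in> E")
    case True
    then have "(a, a) \<notin> E\<^sup>+ "
      using assms by (simp add: acyclic_def)
    then show ?thesis
      using to_parent.IH True by (auto simp: trancl_into_trancl)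
  qed (use to_parent.IH in auto)
  then show ?case
    using to_parent.hyps(2) by simp
qed simp

lemma d_sep_given_parents:
  assumes "acyclic (edges G)" "a \<noteq> b" "\<not> adjacent (edges G) a b" "(a, b) \<notin> (edges G)\<^sup>+"
  shows "d_sep G {a} {b} {p. (p, a) \<in> edges G}"
proof -
  have "{a} \<inter> {p. (p, a) \<in> edges G} = {}"
    using acyclic_no_loop[OF assms(1)] by auto
  moreover have "\<not> bayes_ball (edges G) {p. (p, a) \<in> edges G} {a} b d" for d
    using bayes_ball_given_parents_of_start[OF assms(1), of a b d] assms(2-4)
    by (auto simp: adjacent_def split: if_splits)
  ultimately show ?thesis
    using d_sep_iff_bayes_ball[OF assms(1)] assms(2) by auto
qed

lemma dag_edgeD: "dag V k G \<Longrightarrow> (p, v) \<in> edges G \<Longrightarrow> p \<in> V \<and> v \<in> V \<and> p \<noteq> v"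
  unfolding dag_def edges_def by fastforce

lemma dag_parents_subset: "dag V k G \<Longrightarrow> {p. (p, v) \<in> edges G} \<subseteq> V - {v}"
  using dag_edgeD by fastforce

lemma markov_equiv_sym: "markov_equiv V G1 G2 \<Longrightarrow> markov_equiv V G2 G1"
  unfolding markov_equiv_def by blast

lemma markov_equiv_trans: "markov_equiv V G1 G2 \<Longrightarrow> markov_equiv V G2 G3 \<Longrightarrow> markov_equiv V G1 G3"
  unfolding markov_equiv_def by simp

lemma markov_equiv_refl: "markov_equiv V G G"
  unfolding markov_equiv_def by simp

lemma markov_equiv_d_sep_singletons:
  assumes "markov_equiv V G1 G2" "x \<in> V" "y \<in> V" "Z \<subseteq> V" "x \<noteq> y" "x \<notin> Z" "y \<notin> Z"
  shows "d_sep G1 {x} {y} Z \<longleftrightarrow> d_sep G2 {x} {y} Z"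
  using assms unfolding markov_equiv_def by auto

lemma markov_equiv_adjacent_if_not_reachable:
  assumes "dag V k G1" "dag V k G2" "markov_equiv V G1 G2"
    and "adjacent (edges G1) x y" "(x, y) \<notin> (edges G2)\<^sup>+"
  shows "adjacent (edges G2) x y"
proof (rule ccontr)
  assume "\<not> adjacent (edges G2) x y"
  let ?Z = "{p. (p, x) \<in> edges G2}"
  have "x \<noteq> y" "x \<in> V" "y \<in> V"
    using assms(4) dag_edgeD[OF assms(1)] by (auto simp: adjacent_def)
  have "d_sep G2 {x} {y} ?Z"
    using d_sep_given_parents assms(2,5) \<open>\<not> adjacent (edges G2) x y\<close> \<open>x \<noteq> y\<close>
    by (simp add: dag_def)
  moreover have "?Z \<subseteq> V" "x \<notin> ?Z" "y \<notin> ?Z"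
    using dag_parents_subset[OF assms(2), of x] \<open>\<not> adjacent (edges G2) x y\<close>
    by (auto simp: adjacent_def)
  ultimately have "d_sep G1 {x} {y} ?Z"
    using markov_equiv_d_sep_singletons[OF assms(3)] \<open>x \<noteq> y\<close> \<open>x \<in> V\<close> \<open>y \<in> V\<close> by blast
  moreover have "d_connecting G1 ?Z [x, y]"
    using assms(4) \<open>x \<noteq> y\<close> by (simp add: d_connecting_iff_open_walk)
  ultimately show False
    using d_connecting_not_d_sep by fastforce
qed

lemma markov_equiv_adjacent:
  assumes "dag V k G1" "dag V k G2" "markov_equiv V G1 G2"
  shows "adjacent (edges G1) x y \<longleftrightarrow> adjacent (edges G2) x y"
proof -
  have "adjacent (edges H2) x y" if "dag V k H1" "dag V k H2" "markov_equiv V H1 H2"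
    "adjacent (edges H1) x y" for H1 H2
  proof -
    have "(x, y) \<notin> (edges H2)\<^sup>+ \<or> (y, x) \<notin> (edges H2)\<^sup>+"
      using that(2) by (meson acyclic_def dag_def trancl_trans)
    moreover have "adjacent (edges H1) y x"
      using that(4) by (auto simp: adjacent_def)
    ultimately show ?thesis
      using markov_equiv_adjacent_if_not_reachable[OF that(1-3)] that(4) by (auto simp: adjacent_def)
  qed
  then show ?thesis
    using assms markov_equiv_sym by metis
qed

lemma markov_equiv_v_structure_if_not_reachable:
  assumes "dag V k G1" "dag V k G2" "markov_equiv V G1 G2"
    and "v_structure (edges G1) x c y" "(x, y) \<notin> (edges G1)\<^sup>+"
  shows "v_structure (edges G2) x c y"
proof (rule ccontr)
  assume "\<not> v_structure (edges G2) x c y"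
  let ?Z = "{p. (p, x) \<in> edges G1}"
  have xcy: "(x, c) \<in> edges G1" "(y, c) \<in> edges G1" "x \<noteq> y" "\<not> adjacent (edges G1) x y"
    using assms(4) by (auto simp: v_structure_def)
  then have "x \<in> V" "y \<in> V" "x \<noteq> c" "y \<noteq> c"
    using dag_edgeD[OF assms(1)] by auto
  have skeleton: "adjacent (edges G2) x c" "adjacent (edges G2) c y" "\<not> adjacent (edges G2) x y"
    using markov_equiv_adjacent[OF assms(1-3)] xcy by (auto simp: adjacent_def)
  have "d_sep G1 {x} {y} ?Z"
    using d_sep_given_parents assms(1,5) xcy by (simp add: dag_def)
  moreover have "?Z \<subseteq> V" "x \<notin> ?Z" "y \<notin> ?Z"
    using dag_parents_subset[OF assms(1), of x] xcy(4) by (auto simp: adjacent_def)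
  ultimately have "d_sep G2 {x} {y} ?Z"
    using markov_equiv_d_sep_singletons[OF assms(3)] xcy(3) \<open>x \<in> V\<close> \<open>y \<in> V\<close> by blast
  moreover have "c \<notin> ?Z"
    using xcy(1) acyclic_asym[of "edges G1"] assms(1) by (auto simp: dag_def)
  then have "open_triple (edges G2) ?Z x c y"
    using \<open>\<not> v_structure (edges G2) x c y\<close> skeleton(3) xcy(3)
    by (auto simp: open_triple_def v_structure_def)
  then have "d_connecting G2 ?Z [x, c, y]"
    using skeleton \<open>x \<noteq> c\<close> \<open>y \<noteq> c\<close> xcy(3) by (simp add: d_connecting_iff_open_walk adjacent_def)
  ultimately show False
    using d_connecting_not_d_sep by fastforce
qed

lemma markov_equiv_v_structure:
  assumes "dag V k G1" "dag V k G2" "markov_equiv V G1 G2"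
  shows "v_structure (edges G1) x c y \<longleftrightarrow> v_structure (edges G2) x c y"
proof -
  have swap: "v_structure E x c y \<longleftrightarrow> v_structure E y c x" for E :: "(nat \<times> nat) set"
    by (auto simp: v_structure_def adjacent_def)
  have "v_structure (edges H2) x c y" if "dag V k H1" "dag V k H2" "markov_equiv V H1 H2"
    "v_structure (edges H1) x c y" for H1 H2
  proof -
    have "(x, y) \<notin> (edges H1)\<^sup>+ \<or> (y, x) \<notin> (edges H1)\<^sup>+"
      using that(1) by (meson acyclic_def dag_def trancl_trans)
    then show ?thesis
      using markov_equiv_v_structure_if_not_reachable[OF that(1-3)] that(4) swap by metis
  qed
  then show ?thesis
    using assms markov_equiv_sym by metis
qed

lemma finite_edges_dag:
  assumes "finite V" "dag V k G"
  shows "finite (edges G)"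
proof -
  have "edges G \<subseteq> V \<times> V"
    using dag_edgeD[OF assms(2)] by auto
  then show ?thesis
    using assms(1) finite_subset by blast
qed

lemma markov_equiv_if_same_skeleton_v_structures:
  assumes "finite V" "dag V k G1" "dag V k G2"
    and "\<And>x y. adjacent (edges G1) x y \<longleftrightarrow> adjacent (edges G2) x y"
    and "\<And>x c y. v_structure (edges G1) x c y \<longleftrightarrow> v_structure (edges G2) x c y"
  shows "markov_equiv V G1 G2"
  unfolding markov_equiv_def
proof (intro allI impI)
  fix X Y Z
  assume "X \<subseteq> V \<and> Y \<subseteq> V \<and> Z \<subseteq> V \<and> X \<noteq> {} \<and> Y \<noteq> {} \<and> X \<inter> Y = {} \<and> X \<inter> Z = {} \<and> Y \<inter> Z = {}"
  then have disj: "X \<inter> Y = {}" "X \<inter> Z = {}"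
    by auto
  have acyc: "acyclic (edges G1)" "acyclic (edges G2)"
    using assms(2,3) by (simp_all add: dag_def)
  have "(\<exists>d. bayes_ball (edges G1) Z X y d) \<longleftrightarrow> (\<exists>d. bayes_ball (edges G2) Z X y d)" for y
    by (rule bayes_ball_eq_if_same_skeleton_v_structures[OF finite_edges_dag[OF assms(1,2)] acyc
          assms(4,5)])
  then show "d_sep G1 X Y Z \<longleftrightarrow> d_sep G2 X Y Z"
    using d_sep_iff_bayes_ball[OF acyc(1) disj] d_sep_iff_bayes_ball[OF acyc(2) disj] by simp
qed

section \<open>Replacing the families of a vertex set\<close>

lemma edges_Un: "edges (G \<union> H) = edges G \<union> edges H"
  by (auto simp: edges_def)

lemma edges_mono: "G \<subseteq> H \<Longrightarrow> edges G \<subseteq> edges H"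
  by (auto simp: edges_def)

lemma dag_subset_Pow: "dag V k G \<Longrightarrow> G \<subseteq> V \<times> Pow V"
proof
  fix f
  assume "dag V k G" "f \<in> G"
  then have "fst f \<in> V" "snd f \<subseteq> V"
    unfolding dag_def by auto
  then show "f \<in> V \<times> Pow V"
    by (simp add: mem_Times_iff)
qed

lemma finite_dag: "finite V \<Longrightarrow> dag V k G \<Longrightarrow> finite G"
  using dag_subset_Pow finite_subset by (metis finite_Pow_iff finite_SigmaI)

lemma score_le_opt_score:
  assumes "finite V" "dag V k G"
  shows "score p G \<le> opt_score p V k"
proof -
  have "dags V k \<subseteq> Pow (V \<times> Pow V)"
    unfolding dags_def using dag_subset_Pow by blast
  then have "finite (dags V k)"
    using assms(1) finite_subset by blast
  then show ?thesis
    unfolding opt_score_def using assms(2) by (simp add: dags_def)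
qed

lemma score_Un: "finite G \<Longrightarrow> finite H \<Longrightarrow> G \<inter> H = {} \<Longrightarrow> score p (G \<union> H) = score p G + score p H"
  unfolding score_def by (simp add: sum.union_disjoint)

lemma dag_restrict:
  assumes "dag U k G" "V \<subseteq> U" and closed: "\<forall>f\<in>G. fst f \<in> V \<longrightarrow> snd f \<subseteq> V"
  shows "dag V k {f\<in>G. fst f \<in> V}"
proof -
  have "edges {f\<in>G. fst f \<in> V} \<subseteq> edges G"
    by (rule edges_mono) blast
  then have "acyclic (edges {f\<in>G. fst f \<in> V})"
    using assms(1) acyclic_subset unfolding dag_def by blast
  moreover have "\<exists>!P. (i, P) \<in> {f\<in>G. fst f \<in> V}" if "i \<in> V" for i
  proof -
    have "\<exists>!P. (i, P) \<in> G"
      using that assms(1,2) unfolding dag_def by blast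
    then show ?thesis
      using that by simp
  qed
  moreover have "snd f \<subseteq> V - {fst f} \<and> card (snd f) \<le> k" if "f \<in> G" "fst f \<in> V" for f
    using that assms(1) closed unfolding dag_def by blast
  ultimately show ?thesis
    unfolding dag_def by simp
qed

lemma acyclic_Un_if_separated:
  assumes "finite E" "finite F" "acyclic E" "acyclic F" "Domain E \<inter> Range F = {}"
  shows "acyclic (E \<union> F)"
proof -
  have "wf E" "wf F"
    using finite_acyclic_wf assms(1-4) by auto
  then show ?thesis
    using wf_acyclic wf_Un assms(5) by blast
qed

text \<open>No cycle can use both parts: edges of H start in V, the kept edges end outside V.\<close>

lemma dag_replace_families:
  assumes "finite U" "V \<subseteq> U" "dag V k H" "dag U k G"
  shows "dag U k (H \<union> {f\<in>G. fst f \<notin> V})"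
proof -
  let ?W = "{f\<in>G. fst f \<notin> V}"
  have W_sub: "edges ?W \<subseteq> edges G"
    by (rule edges_mono) blast
  have "finite (edges H)"
    by (rule finite_edges_dag[OF finite_subset[OF assms(2,1)] assms(3)])
  moreover have "finite (edges ?W)"
    by (rule finite_subset[OF W_sub finite_edges_dag[OF assms(1,4)]])
  moreover have "acyclic (edges H)" "acyclic (edges ?W)"
    using assms(3,4) acyclic_subset[OF _ W_sub] unfolding dag_def by blast+
  moreover have "Domain (edges H) \<subseteq> V"
    using dag_edgeD[OF assms(3)] by blast
  then have "Domain (edges H) \<inter> Range (edges ?W) = {}"
    by (auto simp: edges_def)
  ultimately have "acyclic (edges (H \<union> ?W))"
    unfolding edges_Un by (rule acyclic_Un_if_separated)
  moreover have "\<exists>!P. (i, P) \<in> H \<union> ?W" if "i \<in> U" for i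
  proof (cases "i \<in> V")
    case True
    then have "(i, P) \<in> H \<union> ?W \<longleftrightarrow> (i, P) \<in> H" for P
      by auto
    moreover have "\<exists>!P. (i, P) \<in> H"
      using True assms(3) unfolding dag_def by blast
    ultimately show ?thesis
      by simp
  next
    case False
    then have "(i, P) \<in> H \<union> ?W \<longleftrightarrow> (i, P) \<in> G" for P
      using assms(3) unfolding dag_def by auto
    moreover have "\<exists>!P. (i, P) \<in> G"
      using that assms(4) unfolding dag_def by blast
    ultimately show ?thesis
      by simp
  qed
  moreover have "fst f \<in> U \<and> snd f \<subseteq> U - {fst f} \<and> card (snd f) \<le> k" if "f \<in> H \<union> ?W" for f
  proof (cases "f \<in> H")
    case True
    then show ?thesis
      using assms(2,3) unfolding dag_def by auto
  next
    case False
    then show ?thesis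
      using that assms(4) unfolding dag_def by auto
  qed
  ultimately show ?thesis
    unfolding dag_def by blast
qed

lemma v_structure_Un_iff:
  assumes "Range E \<subseteq> V" "Range F \<inter> V = {}"
  shows "v_structure (E \<union> F) x c y \<longleftrightarrow>
    (if c \<in> V then v_structure E x c y else v_structure F x c y) \<and> \<not> adjacent (E \<union> F) x y"
  using assms by (auto simp: v_structure_def adjacent_def)

lemma markov_equiv_replace_families:
  assumes "finite U" "V \<subseteq> U" "dag U k G" "dag V k {f\<in>G. fst f \<in> V}" "dag V k H"
    and "markov_equiv V {f\<in>G. fst f \<in> V} H"
  shows "markov_equiv U G (H \<union> {f\<in>G. fst f \<notin> V})"
proof -
  let ?H1 = "{f\<in>G. fst f \<in> V}" and ?W = "{f\<in>G. fst f \<notin> V}"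
  have "G = ?H1 \<union> ?W"
    by blast
  then have G_split: "edges G = edges ?H1 \<union> edges ?W"
    by (metis edges_Un)
  have ranges: "Range (edges ?H1) \<subseteq> V" "Range (edges H) \<subseteq> V" "Range (edges ?W) \<inter> V = {}"
    using dag_edgeD[OF assms(4)] dag_edgeD[OF assms(5)] by (blast, blast, auto simp: edges_def)
  have same_adj: "adjacent (edges G) x y \<longleftrightarrow> adjacent (edges (H \<union> ?W)) x y" for x y
    using markov_equiv_adjacent[OF assms(4-6), of x y]
    unfolding G_split edges_Un by (auto simp: adjacent_def)
  have "v_structure (edges G) x c y \<longleftrightarrow> v_structure (edges (H \<union> ?W)) x c y" for x c y
    using markov_equiv_v_structure[OF assms(4-6), of x c y] same_adj[of x y]
      v_structure_Un_iff[OF ranges(1,3)] v_structure_Un_iff[OF ranges(2,3)]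
    unfolding G_split edges_Un by simp
  then show ?thesis
    using markov_equiv_if_same_skeleton_v_structures[OF assms(1,3)] same_adj
      dag_replace_families[OF assms(1,2,5,3)] by blast
qed

section \<open>Stable distributions\<close>

lemma is_EC_member_iff:
  assumes "is_EC V k E" "G \<in> E"
  shows "G' \<in> E \<longleftrightarrow> dag V k G' \<and> markov_equiv V G G'"
  using assms markov_equiv_sym markov_equiv_trans unfolding is_EC_def by blast

lemma score_split:
  assumes "finite G"
  shows "score p G = score p {f\<in>G. fst f \<in> V} + score p {f\<in>G. fst f \<notin> V}"
proof -
  have "G = {f\<in>G. fst f \<in> V} \<union> {f\<in>G. fst f \<notin> V}"
    by blast
  then show ?thesis
    using score_Un[of "{f\<in>G. fst f \<in> V}" "{f\<in>G. fst f \<notin> V}" p] assms by auto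
qed

text \<open>Otherwise the families of V in G could be replaced by an optimal DAG over V, gaining
  more than \<open>\<gamma>\<close> and beating the optimum.\<close>

lemma restriction_in_optimal_class:
  assumes "finite U" "V \<subseteq> U" "dag U k G" "\<forall>f\<in>G. fst f \<in> V \<longrightarrow> snd f \<subseteq> V"
    and "score p G \<ge> opt_score p U k - \<gamma>"
    and "is_EC V k E0" "\<forall>H\<in>E0. score p H = opt_score p V k"
    and gap: "\<forall>E. is_EC V k E \<and> E \<noteq> E0 \<longrightarrow> (\<forall>H\<in>E. score p H < opt_score p V k - \<gamma>)"
  shows "{f\<in>G. fst f \<in> V} \<in> E0"
proof (rule ccontr)
  let ?H = "{f\<in>G. fst f \<in> V}" and ?W = "{f\<in>G. fst f \<notin> V}"
  assume "?H \<notin> E0"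
  have "dag V k ?H"
    using dag_restrict[OF assms(3,2,4)] .
  then have "is_EC V k {G'. dag V k G' \<and> markov_equiv V ?H G'}"
    unfolding is_EC_def by blast
  moreover have "?H \<in> {G'. dag V k G' \<and> markov_equiv V ?H G'}"
    using \<open>dag V k ?H\<close> markov_equiv_refl by blast
  ultimately have "score p ?H < opt_score p V k - \<gamma>"
    using gap \<open>?H \<notin> E0\<close> by blast
  obtain G0 where "dag V k G0" "G0 \<in> E0"
    using assms(6) markov_equiv_refl unfolding is_EC_def by blast
  have "finite V"
    using assms(1,2) finite_subset by blast
  let ?G' = "G0 \<union> ?W"
  have "G0 \<inter> ?W = {}"
    using \<open>dag V k G0\<close> unfolding dag_def by auto
  moreover have "finite ?W"
    using finite_dag[OF assms(1,3)] by simp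
  ultimately have "score p ?G' = score p G0 + score p ?W"
    using score_Un finite_dag[OF \<open>finite V\<close> \<open>dag V k G0\<close>] by blast
  moreover have "score p ?G' \<le> opt_score p U k"
    using score_le_opt_score[OF assms(1) dag_replace_families[OF assms(1,2) \<open>dag V k G0\<close> assms(3)]] .
  moreover have "score p G = score p ?H + score p ?W"
    using score_split finite_dag[OF assms(1,3)] by blast
  moreover have "score p G0 = opt_score p V k"
    using assms(7) \<open>G0 \<in> E0\<close> by blast
  ultimately show False
    using assms(5) \<open>score p ?H < opt_score p V k - \<gamma>\<close> by linarith
qed

lemma stable_closed:
  assumes "stable p d k \<gamma> V" "dag {..<d} k G" "score p G \<ge> opt_score p {..<d} k - \<gamma>"
  shows "dag V k {f\<in>G. fst f \<in> V}" "\<forall>f\<in>G. fst f \<in> V \<longrightarrow> snd f \<subseteq> V"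
proof -
  have "V \<subseteq> {..<d}" "\<forall>f\<in>G. fst f \<in> V \<longrightarrow> snd f \<subseteq> V"
    using assms unfolding stable_def by blast+
  then show "dag V k {f\<in>G. fst f \<in> V}" "\<forall>f\<in>G. fst f \<in> V \<longrightarrow> snd f \<subseteq> V"
    using dag_restrict[OF assms(2)] by blast+
qed

lemma stable_restrictions_markov_equiv:
  assumes "stable p d k \<gamma> V"
    and "dag {..<d} k G1" "score p G1 \<ge> opt_score p {..<d} k - \<gamma>"
    and "dag {..<d} k G2" "score p G2 \<ge> opt_score p {..<d} k - \<gamma>"
  shows "markov_equiv V {f\<in>G1. fst f \<in> V} {f\<in>G2. fst f \<in> V}"
proof -
  have "V \<subseteq> {..<d}" and "\<exists>E0. is_EC V k E0 \<and> (\<forall>H\<in>E0. score p H = opt_score p V k)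
      \<and> (\<forall>E. is_EC V k E \<and> E \<noteq> E0 \<longrightarrow> (\<forall>H\<in>E. score p H < opt_score p V k - \<gamma>))"
    using assms(1) unfolding stable_def by blast+
  then obtain E0 where E0: "is_EC V k E0" "\<forall>H\<in>E0. score p H = opt_score p V k"
    "\<forall>E. is_EC V k E \<and> E \<noteq> E0 \<longrightarrow> (\<forall>H\<in>E. score p H < opt_score p V k - \<gamma>)"
    by blast
  have "{f\<in>G. fst f \<in> V} \<in> E0" if "dag {..<d} k G" "score p G \<ge> opt_score p {..<d} k - \<gamma>" for G
    using restriction_in_optimal_class[OF finite_lessThan \<open>V \<subseteq> {..<d}\<close> that(1)
        stable_closed(2)[OF assms(1) that] that(2) E0] .
  then show ?thesis
    using is_EC_member_iff[OF E0(1)] assms(2-5) by blast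
qed

theorem lemma5:
  fixes p :: "(nat \<Rightarrow> 'b) pmf" and d k :: nat and \<gamma> :: real and V :: "nat set"
    and A :: "family set" and E_star E_tilde :: "family set set" and G_star :: "family set"
  assumes "k > 0"
    and "finite (set_pmf p)"
    and "stable p d k \<gamma> V"
    and "A \<subseteq> families d k"
    and "is_EC {..<d} k E_star"
    and "\<forall>G\<in>E_star. score p G = opt_score p {..<d} k"
    and "G_star \<in> cap E_star A"
    and "is_EC {..<d} k E_tilde"
    and "E_tilde \<noteq> E_star"
    and "\<forall>G\<in>E_tilde. score p G \<ge> opt_score p {..<d} k - \<gamma>"
    and "cap E_tilde A \<noteq> {}"
  shows "\<exists>G\<in>cap E_tilde A. {f\<in>G. fst f \<in> V} = {f\<in>G_star. fst f \<in> V}"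
proof -
  let ?U = "{..<d}" and ?H = "{f\<in>G_star. fst f \<in> V}"
  obtain G_tilde where G_tilde: "G_tilde \<in> E_tilde" "A \<subseteq> G_tilde"
    using assms(11) unfolding cap_def by blast
  have "G_star \<in> E_star" "A \<subseteq> G_star" "\<gamma> > 0" "V \<subseteq> ?U"
    using assms(3,7) unfolding cap_def stable_def by auto
  then have star: "dag ?U k G_star" "score p G_star \<ge> opt_score p ?U k - \<gamma>"
    and tilde: "dag ?U k G_tilde" "score p G_tilde \<ge> opt_score p ?U k - \<gamma>"
    using G_tilde(1) assms(5,6,8,10) unfolding is_EC_def by auto
  let ?G = "?H \<union> {f\<in>G_tilde. fst f \<notin> V}"
  have "markov_equiv ?U G_tilde ?G"
    using markov_equiv_replace_families[OF finite_lessThan \<open>V \<subseteq> ?U\<close> tilde(1)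
        stable_closed(1)[OF assms(3) tilde] stable_closed(1)[OF assms(3) star]
        stable_restrictions_markov_equiv[OF assms(3) tilde star]] .
  moreover have "dag ?U k ?G"
    using dag_replace_families[OF finite_lessThan \<open>V \<subseteq> ?U\<close> stable_closed(1)[OF assms(3) star]
        tilde(1)] .
  ultimately have "?G \<in> cap E_tilde A"
    using is_EC_member_iff[OF assms(8) G_tilde(1)] \<open>A \<subseteq> G_star\<close> G_tilde(2)
    unfolding cap_def by blast
  then show ?thesis
    by (intro bexI[of _ ?G]) auto
qed

end
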